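(* Every compactly generated totally disconnected locally compact group $G$ has an essentially chief series, i.e. a finite series $\{1\}=N_0\trianglelefteq N_1\trianglelefteq\dots\trianglelefteq N_n=G$ of closed normal subgroups of $G$ such that for each $1\le i\le n$ the quotient $N_i/N_{i-1}$ is compact, or discrete, or a chief factor of $G$ (meaning there is no closed normal subgroup $N\trianglelefteq G$ with $N_{i-1}\subsetneq N\subsetneq N_i$).
   Context: All $N_i$ are required to be closed and normal in $G$ itself (not merely in $N_{i+1}$); quotients carry the quotient topology. *)

theory Defs
  imports "HOL-Analysis.Analysis" "HOL-Algebra.Coset" "HOL-Algebra.Generated_Groups"
begin

definition quotient_topology :: "'a topology \<Rightarrow> ('a \<Rightarrow> 'b) \<Rightarrow> 'b topology" where
  "quotient_topology X f =
     topology (\<lambda>V. V \<subseteq> f ` topspace X \<and> openin X {x \<in> topspace X. f x \<in> V})"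

definition totally_disconnected_space :: "'a topology \<Rightarrow> bool" where
  "totally_disconnected_space X \<longleftrightarrow>
     (\<forall>S. connectedin X S \<longrightarrow> (\<exists>a. S \<subseteq> {a}))"

definition topological_group :: "('a, 'b) monoid_scheme \<Rightarrow> 'a topology \<Rightarrow> bool" where
  "topological_group G T \<longleftrightarrow> group G \<and> topspace T = carrier G \<and>
     continuous_map (prod_topology T T) T (\<lambda>(x, y). x \<otimes>\<^bsub>G\<^esub> y) \<and>
     continuous_map T T (\<lambda>x. inv\<^bsub>G\<^esub> x)"

definition tdlc_group :: "('a, 'b) monoid_scheme \<Rightarrow> 'a topology \<Rightarrow> bool" where
  "tdlc_group G T \<longleftrightarrow> topological_group G T \<and> Hausdorff_space T \<and>
     locally_compact_space T \<and> totally_disconnected_space T"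

definition compactly_generated :: "('a, 'b) monoid_scheme \<Rightarrow> 'a topology \<Rightarrow> bool" where
  "compactly_generated G T \<longleftrightarrow>
     (\<exists>K. K \<subseteq> carrier G \<and> compactin T K \<and> generate G K = carrier G)"

text \<open>The quotient B/A (A normal in G, A \<subseteq> B) as the coset space {A #> b | b \<in> B}
  with the quotient topology from the subspace topology on B.\<close>
definition quotient_factor_topology ::
  "('a, 'b) monoid_scheme \<Rightarrow> 'a topology \<Rightarrow> 'a set \<Rightarrow> 'a set \<Rightarrow> 'a set topology" where
  "quotient_factor_topology G T B A = quotient_topology (subtopology T B) (\<lambda>x. A #>\<^bsub>G\<^esub> x)"

definition closed_normal :: "('a, 'b) monoid_scheme \<Rightarrow> 'a topology \<Rightarrow> 'a set \<Rightarrow> bool" where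
  "closed_normal G T N \<longleftrightarrow> N \<lhd> G \<and> closedin T N"

definition chief_factor :: "('a, 'b) monoid_scheme \<Rightarrow> 'a topology \<Rightarrow> 'a set \<Rightarrow> 'a set \<Rightarrow> bool" where
  "chief_factor G T B A \<longleftrightarrow> \<not> (\<exists>N. closed_normal G T N \<and> A \<subset> N \<and> N \<subset> B)"

definition essentially_chief_series ::
  "('a, 'b) monoid_scheme \<Rightarrow> 'a topology \<Rightarrow> (nat \<Rightarrow> 'a set) \<Rightarrow> nat \<Rightarrow> bool" where
  "essentially_chief_series G T N n \<longleftrightarrow>
     N 0 = {\<one>\<^bsub>G\<^esub>} \<and> N n = carrier G \<and>
     (\<forall>i\<le>n. closed_normal G T (N i)) \<and>
     (\<forall>i<n. N i \<subseteq> N (Suc i)) \<and>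
     (\<forall>i\<in>{1..n}.
        compact_space (quotient_factor_topology G T (N i) (N (i - 1))) \<or>
        quotient_factor_topology G T (N i) (N (i - 1)) =
          discrete_topology (topspace (quotient_factor_topology G T (N i) (N (i - 1)))) \<or>
        chief_factor G T (N i) (N (i - 1)))"

end

theory Submission
  imports Defs "HOL-Algebra.SndIsomorphismGrp"
begin

text \<open>
  Fix a compact open subgroup \<open>U\<close> (van Dantzig) and a compact generating set \<open>K\<^sub>0\<close>, and
  choose a finite set \<open>R\<close> with \<open>U (K\<^sub>0 \<union> K\<^sub>0\<inverse>) \<subseteq> R U\<close>. For a closed normal subgroup \<open>N\<close>, its cover
  index is the number of classes of \<open>R\<close> modulo the open subgroup \<open>U N\<close>. The index is antitone in
  \<open>N\<close>, and along any chain it is attained by a member of the chain: for closures of unions because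
  \<open>R\<close> is finite, for intersections because \<open>U\<close> is compact.

  Given a closed normal \<open>K\<close>, Zorn's lemma yields a maximal closed normal \<open>M \<supseteq> K\<close> of the same index.
  Equality of the indices forces the generators to normalise \<open>M \<inter> U K\<close>, so
  \<open>K \<le> M \<inter> U K \<le> M\<close> with a compact first factor (as \<open>M \<inter> U K \<subseteq> U K\<close>) and a discrete second one
  (as \<open>M \<inter> U K\<close> is open in \<open>M\<close>). If \<open>M \<noteq> G\<close>, a minimal closed normal \<open>L \<supset> M\<close> gives a chief
  factor \<open>L/M\<close>, and \<open>L\<close> has smaller index than \<open>K\<close>; induction on the index builds the series from
  \<open>K\<close> up to \<open>G\<close>, and \<open>K = {1}\<close> gives the theorem.
\<close>

lemma image_eq_image_factor:
  assumes "\<forall>r\<in>R. \<forall>r'\<in>R. h r = h r' \<longrightarrow> f r = f r'"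
  shows "f ` R = (f \<circ> inv_into R h) ` h ` R"
    and "x \<in> R \<Longrightarrow> (f \<circ> inv_into R h) (h x) = f x"
proof -
  show F: "(f \<circ> inv_into R h) (h x) = f x" if "x \<in> R" for x
  proof -
    have "inv_into R h (h x) \<in> R" "h (inv_into R h (h x)) = h x"
      using that by (auto intro: inv_into_into f_inv_into_f)
    then show ?thesis using assms that by (metis comp_apply)
  qed
  show "f ` R = (f \<circ> inv_into R h) ` h ` R"
    unfolding image_image using F by (intro image_cong) simp_all
qed

lemma card_image_le_if_factors:
  assumes "finite R" and "\<forall>r\<in>R. \<forall>r'\<in>R. h r = h r' \<longrightarrow> f r = f r'"
  shows "card (f ` R) \<le> card (h ` R)"
  unfolding image_eq_image_factor(1)[OF assms(2)] using assms(1) by (simp add: card_image_le)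

lemma eq_if_card_image_eq_factors:
  assumes "finite R" and "\<forall>r\<in>R. \<forall>r'\<in>R. h r = h r' \<longrightarrow> f r = f r'"
    and "card (f ` R) = card (h ` R)" and "r \<in> R" "r' \<in> R" "f r = f r'"
  shows "h r = h r'"
proof -
  have "inj_on (f \<circ> inv_into R h) (h ` R)"
    using assms(1,3) image_eq_image_factor(1)[OF assms(2)] by (metis eq_card_imp_inj_on finite_imageI)
  then show ?thesis
    using image_eq_image_factor(2)[OF assms(2)] assms(4-6) by (metis imageI inj_onD)
qed

lemma subset_Zorn_min:
  assumes "\<And>C. subset.chain A C \<Longrightarrow> \<exists>L\<in>A. \<forall>X\<in>C. L \<subseteq> X"
  shows "\<exists>M\<in>A. \<forall>X\<in>A. X \<subseteq> M \<longrightarrow> X = M"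
proof (rule predicate_Zorn[of A "\<lambda>a b. b \<subseteq> a", simplified])
  show "partial_order_on A (relation_of (\<lambda>a b. b \<subseteq> a) A)"
    by (auto simp: partial_order_on_def preorder_on_def refl_on_def trans_on_def antisym_on_def
        relation_of_def)
next
  fix C assume "C \<in> Chains (relation_of (\<lambda>a b. b \<subseteq> a) A)"
  then have "subset.chain A C"
    unfolding Chains_def relation_of_def subset_chain_def by blast
  then show "\<exists>u\<in>A. \<forall>a\<in>C. u \<subseteq> a" using assms by blast
qed

lemma compactin_Inter_chain_nonempty:
  assumes K: "compactin X K" and \<C>: "subset.chain {A. closedin X A \<and> K \<inter> A \<noteq> {}} \<C>"
    and ne: "\<C> \<noteq> {}"
  shows "K \<inter> \<Inter>\<C> \<noteq> {}"
proof -
  have cl: "\<forall>A\<in>\<C>. closedin X A" and meets: "\<forall>A\<in>\<C>. K \<inter> A \<noteq> {}"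
    using \<C> unfolding subset_chain_def by auto
  let ?\<U> = "(\<lambda>A. K \<inter> A) ` \<C>"
  have "\<forall>C\<in>?\<U>. closedin (subtopology X K) C"
    using cl by (auto simp: closedin_subtopology)
  moreover have "\<Inter>\<F> \<noteq> {}" if \<F>: "finite \<F>" "\<F> \<subseteq> ?\<U>" for \<F>
  proof (cases "\<F> = {}")
    case False
    obtain \<C>0 where \<C>0: "\<C>0 \<subseteq> \<C>" "finite \<C>0" "\<F> = (\<lambda>A. K \<inter> A) ` \<C>0"
      using \<F> by (meson finite_subset_image)
    moreover have "subset.chain \<C> \<C>0"
      using \<C> \<C>0(1) unfolding subset_chain_def by blast
    ultimately have "\<Inter>\<C>0 \<in> \<C>0"
      using False by (intro Inter_in_chain) auto
    then show ?thesis using \<C>0 meets by auto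
  qed simp
  ultimately have "\<Inter>?\<U> \<noteq> {}"
    using compact_space_fip[THEN iffD1, OF compact_space_subtopology[OF K], THEN spec, of ?\<U>]
    by blast
  then show ?thesis using ne by auto
qed

section \<open>Quotient topologies and totally disconnected spaces\<close>

lemma quotient_topology_istopology:
  "istopology (\<lambda>V. V \<subseteq> f ` topspace X \<and> openin X {x \<in> topspace X. f x \<in> V})"
proof -
  let ?P = "\<lambda>V. V \<subseteq> f ` topspace X \<and> openin X {x \<in> topspace X. f x \<in> V}"
  have "?P (S \<inter> T)" if "?P S" "?P T" for S T
  proof -
    have "{x \<in> topspace X. f x \<in> S \<inter> T} = {x \<in> topspace X. f x \<in> S} \<inter> {x \<in> topspace X. f x \<in> T}"
      by blast
    then show ?thesis using that by auto
  qed
  moreover have "?P (\<Union>\<K>)" if "\<forall>S\<in>\<K>. ?P S" for \<K>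
  proof -
    have "{x \<in> topspace X. f x \<in> \<Union>\<K>} = (\<Union>S\<in>\<K>. {x \<in> topspace X. f x \<in> S})" by blast
    then show ?thesis using that by auto
  qed
  ultimately show ?thesis unfolding istopology_def by blast
qed

lemma openin_quotient_topology:
  "openin (quotient_topology X f) V \<longleftrightarrow> V \<subseteq> f ` topspace X \<and> openin X {x \<in> topspace X. f x \<in> V}"
  unfolding quotient_topology_def topology_inverse'[OF quotient_topology_istopology] ..

lemma topspace_quotient_topology: "topspace (quotient_topology X f) = f ` topspace X"
proof -
  have "{x \<in> topspace X. f x \<in> f ` topspace X} = topspace X" by blast
  then have "openin (quotient_topology X f) (f ` topspace X)"
    unfolding openin_quotient_topology by simp
  then show ?thesis
    using openin_subset openin_quotient_topology[of X f "topspace (quotient_topology X f)"] by blast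
qed

lemma continuous_map_quotient_topology: "continuous_map X (quotient_topology X f) f"
  unfolding continuous_map_def topspace_quotient_topology openin_quotient_topology by auto

lemma compact_space_quotient_topology:
  assumes "compactin X C" and "f ` topspace X \<subseteq> f ` C"
  shows "compact_space (quotient_topology X f)"
proof -
  have "compactin (quotient_topology X f) (f ` C)"
    using assms(1) continuous_map_quotient_topology by (rule image_compactin)
  moreover have "f ` C = topspace (quotient_topology X f)"
    using assms compactin_subset_topspace by (fastforce simp: topspace_quotient_topology)
  ultimately show ?thesis by (simp add: compact_space_def)
qed

lemma quotient_topology_discrete:
  assumes "\<And>x. x \<in> topspace X \<Longrightarrow> openin X {y \<in> topspace X. f y = f x}"
  shows "quotient_topology X f = discrete_topology (topspace (quotient_topology X f))"
proof (rule topology_eq[THEN iffD2], intro allI iffI)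
  fix V assume "openin (discrete_topology (topspace (quotient_topology X f))) V"
  then have V: "V \<subseteq> f ` topspace X" by (simp add: topspace_quotient_topology)
  have "{x \<in> topspace X. f x \<in> V} = (\<Union>x\<in>{x \<in> topspace X. f x \<in> V}. {y \<in> topspace X. f y = f x})"
    by auto
  also have "openin X \<dots>" by (rule openin_Union) (auto intro: assms)
  finally have "openin X {x \<in> topspace X. f x \<in> V}" .
  then show "openin (quotient_topology X f) V" using V by (simp add: openin_quotient_topology)
qed (use openin_subset in simp)

lemma singleton_in_quasi_components_of_compact:
  assumes "Hausdorff_space X" "totally_disconnected_space X" "compactin X C" "x \<in> C"
  shows "{x} \<in> quasi_components_of (subtopology X C)"
proof -
  define Y where "Y = subtopology X C"
  have xY: "x \<in> topspace Y"
    unfolding Y_def using compactin_subset_topspace[OF assms(3)] assms(4) by auto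
  have "connectedin X (connected_component_of_set Y x)"
    using connectedin_connected_component_of[of Y x] unfolding Y_def connectedin_subtopology by blast
  then obtain a where "connected_component_of_set Y x \<subseteq> {a}"
    using assms(2) unfolding totally_disconnected_space_def by blast
  moreover have "x \<in> connected_component_of_set Y x"
    using xY by (simp add: connected_component_of_refl)
  moreover have "quasi_component_of Y x = connected_component_of Y x"
    using compact_space_subtopology[OF assms(3)] assms(1) unfolding Y_def
    by (intro quasi_eq_connected_component_of) (auto intro: Hausdorff_space_subtopology)
  ultimately have "quasi_component_of_set Y x = {x}" by auto
  then show ?thesis
    using quasi_component_in_quasi_components_of[of Y x] xY unfolding Y_def by simp
qed

lemma totally_disconnected_compact_open_nbhd:
  assumes H: "Hausdorff_space X" and LC: "locally_compact_space X"
    and TD: "totally_disconnected_space X" and x: "x \<in> topspace X"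
  shows "\<exists>V. openin X V \<and> compactin X V \<and> x \<in> V"
proof -
  obtain W C where W: "openin X W" and C: "compactin X C" and xW: "x \<in> W" and WC: "W \<subseteq> C"
    using LC x unfolding locally_compact_space_def by blast
  define Y where "Y = subtopology X C"
  have cY: "compact_space Y" unfolding Y_def using C by (rule compact_space_subtopology)
  have Q: "{x} \<in> quasi_components_of Y"
    unfolding Y_def using singleton_in_quasi_components_of_compact[OF H TD C] xW WC by blast
  \<comment> \<open>A clopen piece of \<open>C\<close> containing \<open>x\<close> and missing \<open>C - W\<close> is compact and open in \<open>X\<close>.\<close>
  have "openin Y W" unfolding Y_def openin_subtopology using W WC by blast
  then have "compactin Y (topspace Y - W)"
    by (intro closedin_compact_space[OF cY] closedin_diff closedin_topspace)
  then have "separated_between Y {x} (topspace Y - W)"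
    using separated_between_quasi_component_compact[OF Q] xW by (simp add: disjnt_def)
  then obtain A B where A: "openin Y A" and B: "openin Y B" and AB: "A \<union> B = topspace Y"
    and dAB: "disjnt A B" and xA: "{x} \<subseteq> A" and WB: "topspace Y - W \<subseteq> B"
    unfolding separated_between_def by blast
  have AW: "A \<subseteq> W"
  proof
    fix y assume "y \<in> A"
    then have "y \<in> topspace Y" "y \<notin> B" using AB dAB by (auto simp: disjnt_def)
    then show "y \<in> W" using WB by blast
  qed
  obtain V where "openin X V" "A = V \<inter> C"
    using A unfolding Y_def openin_subtopology by blast
  then have "A = V \<inter> W" using AW WC by blast
  then have "openin X A" using \<open>openin X V\<close> W by auto
  moreover have "A = topspace Y - B" using AB dAB by (auto simp: disjnt_def)
  then have "closedin Y A" using B by auto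
  then have "compactin X A"
    using closedin_compact_space[OF cY] unfolding Y_def compactin_subtopology by blast
  ultimately show ?thesis using xA by blast
qed

section \<open>Subgroups and products of subsets\<close>

lemma (in group) subgroup_right_stabilizer:
  assumes "V \<subseteq> carrier G"
  shows "subgroup {g \<in> carrier G. \<forall>v\<in>V. v \<otimes> g \<in> V \<and> v \<otimes> inv g \<in> V} G"
    (is "subgroup ?U G")
proof (rule subgroupI)
  show "?U \<subseteq> carrier G" by blast
  show "?U \<noteq> {}" using assms by (auto intro!: exI[of _ \<one>])
next
  fix a assume "a \<in> ?U"
  then show "inv a \<in> ?U" by simp
next
  fix a b assume a: "a \<in> ?U" and b: "b \<in> ?U"
  have "v \<otimes> (a \<otimes> b) \<in> V \<and> v \<otimes> inv (a \<otimes> b) \<in> V" if v: "v \<in> V" for v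
  proof -
    have "v \<in> carrier G" "a \<in> carrier G" "b \<in> carrier G" using a b v assms by auto
    then have "v \<otimes> (a \<otimes> b) = (v \<otimes> a) \<otimes> b" "v \<otimes> inv (a \<otimes> b) = (v \<otimes> inv b) \<otimes> inv a"
      by (simp_all add: m_assoc inv_mult_group)
    moreover have "(v \<otimes> a) \<otimes> b \<in> V" "(v \<otimes> inv b) \<otimes> inv a \<in> V" using a b v by auto
    ultimately show ?thesis by simp
  qed
  then show "a \<otimes> b \<in> ?U" using a b by auto
qed

lemma set_multI: "h \<in> H \<Longrightarrow> k \<in> K \<Longrightarrow> x = h \<otimes>\<^bsub>G\<^esub> k \<Longrightarrow> x \<in> H <#>\<^bsub>G\<^esub> K"
  unfolding set_mult_def by blast

lemma set_multE:
  assumes "x \<in> H <#>\<^bsub>G\<^esub> K"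
  obtains h k where "h \<in> H" "k \<in> K" "x = h \<otimes>\<^bsub>G\<^esub> k"
  using assms unfolding set_mult_def by blast

lemma (in group) normal_Union_chain:
  assumes "\<forall>N\<in>\<C>. N \<lhd> G" and "\<forall>X\<in>\<C>. \<forall>Y\<in>\<C>. X \<subseteq> Y \<or> Y \<subseteq> X" and "\<C> \<noteq> {}"
  shows "\<Union>\<C> \<lhd> G"
proof -
  have sub: "subgroup N G" if "N \<in> \<C>" for N using assms(1) that by (simp add: normal_imp_subgroup)
  have "subgroup (\<Union>\<C>) G"
  proof (rule subgroupI)
    show "\<Union>\<C> \<subseteq> carrier G" using subgroup.subset[OF sub] by blast
    obtain N where "N \<in> \<C>" using assms(3) by blast
    then show "\<Union>\<C> \<noteq> {}" using subgroup.one_closed[OF sub] by blast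
  next
    fix a assume "a \<in> \<Union>\<C>"
    then show "inv a \<in> \<Union>\<C>" using subgroup.m_inv_closed[OF sub] by blast
  next
    fix a b assume "a \<in> \<Union>\<C>" "b \<in> \<Union>\<C>"
    then obtain A B where AB: "A \<in> \<C>" "a \<in> A" "B \<in> \<C>" "b \<in> B" by blast
    then obtain C where "C \<in> \<C>" "a \<in> C" "b \<in> C" using assms(2) by blast
    then show "a \<otimes> b \<in> \<Union>\<C>" using subgroup.m_closed[OF sub] by blast
  qed
  moreover have "x \<otimes> h \<otimes> inv x \<in> \<Union>\<C>" if x: "x \<in> carrier G" and h: "h \<in> \<Union>\<C>" for x h
  proof -
    obtain N where "N \<in> \<C>" "h \<in> N" using h by blast
    then show ?thesis using normal.inv_op_closed2[OF _ x] assms(1) by blast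
  qed
  ultimately show ?thesis by (simp add: normal_inv_iff)
qed

lemma (in group) normal_Inter:
  assumes "\<forall>N\<in>\<C>. N \<lhd> G" and "\<C> \<noteq> {}"
  shows "\<Inter>\<C> \<lhd> G"
proof -
  have "subgroup (\<Inter>\<C>) G"
    using assms by (intro subgroups_Inter) (auto simp: normal_imp_subgroup)
  moreover have "x \<otimes> h \<otimes> inv x \<in> \<Inter>\<C>" if "x \<in> carrier G" "h \<in> \<Inter>\<C>" for x h
    using normal.inv_op_closed2[OF _ that(1)] assms(1) that(2) by blast
  ultimately show ?thesis by (simp add: normal_inv_iff)
qed

lemma (in group) normal_if_conj_generators:
  assumes A: "subgroup A G" and gen: "generate G X = carrier G"
    and conj: "\<And>s x. s \<in> X \<union> (\<lambda>x. inv x) ` X \<Longrightarrow> x \<in> A \<Longrightarrow> inv s \<otimes> x \<otimes> s \<in> A"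
  shows "A \<lhd> G"
proof -
  have conj_all: "\<forall>x\<in>A. inv g \<otimes> x \<otimes> g \<in> A" if "g \<in> generate G X" for g
    using that
  proof (induction g rule: generate.induct)
    case one
    then show ?case using subgroup.mem_carrier[OF A] by simp
  next
    case (incl h)
    then show ?case by (intro ballI conj) auto
  next
    case (inv h)
    then show ?case by (intro ballI conj) auto
  next
    case (eng h1 h2)
    have "inv (h1 \<otimes> h2) \<otimes> x \<otimes> (h1 \<otimes> h2) \<in> A" if x: "x \<in> A" for x
    proof -
      have "h1 \<in> carrier G" "h2 \<in> carrier G" "x \<in> carrier G"
        using eng.hyps gen subgroup.mem_carrier[OF A x] by auto
      then have "inv (h1 \<otimes> h2) \<otimes> x \<otimes> (h1 \<otimes> h2) = inv h2 \<otimes> (inv h1 \<otimes> x \<otimes> h1) \<otimes> h2"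
        by (simp add: m_assoc inv_mult_group)
      moreover have "inv h2 \<otimes> (inv h1 \<otimes> x \<otimes> h1) \<otimes> h2 \<in> A"
        using eng.IH x by blast
      ultimately show ?thesis by simp
    qed
    then show ?case by blast
  qed
  have "x \<otimes> h \<otimes> inv x \<in> A" if "x \<in> carrier G" "h \<in> A" for x h
    using conj_all[of "inv x"] gen that by simp
  then show ?thesis using A by (simp add: normal_inv_iff)
qed

lemma (in group) r_coset_Int_subgroup:
  assumes L: "subgroup L G" and "H \<subseteq> carrier G" and x: "x \<in> L"
  shows "(L \<inter> H) #> x = L \<inter> (H #> x)"
proof -
  have xc: "x \<in> carrier G" using subgroup.mem_carrier[OF L x] .
  have "h \<otimes> x \<in> L \<longleftrightarrow> h \<in> L" if "h \<in> H" for h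
  proof
    assume "h \<otimes> x \<in> L"
    then have "h \<otimes> x \<otimes> inv x \<in> L" using L x by (simp add: subgroup.m_closed subgroup.m_inv_closed)
    moreover have "h \<in> carrier G" using that assms(2) by blast
    ultimately show "h \<in> L" using xc by (simp add: m_assoc)
  qed (rule subgroup.m_closed[OF L _ x])
  then show ?thesis unfolding r_coset_def by auto
qed

lemma (in group) subgroup_set_mult_normal:
  assumes "subgroup H G" and "N \<lhd> G"
  shows "subgroup (H <#> N) G"
  using second_isomorphism_grp.normal_set_mult_subgroup[of N G H] commut_normal[OF assms] assms
  unfolding second_isomorphism_grp_def second_isomorphism_grp_axioms_def by simp

lemma (in group) subset_set_mult_subgroup:
  assumes "subgroup H G" "subgroup N G"
  shows "H \<subseteq> H <#> N" and "N \<subseteq> H <#> N"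
proof -
  have "h \<otimes> \<one> \<in> H <#> N" if "h \<in> H" for h
    using that subgroup.one_closed[OF assms(2)] unfolding set_mult_def by blast
  then show "H \<subseteq> H <#> N" using subgroup.mem_carrier[OF assms(1)] by force
  have "\<one> \<otimes> n \<in> H <#> N" if "n \<in> N" for n
    using that subgroup.one_closed[OF assms(1)] unfolding set_mult_def by blast
  then show "N \<subseteq> H <#> N" using subgroup.mem_carrier[OF assms(2)] by force
qed

lemma (in group) set_mult_iff_Int_l_coset:
  assumes U: "subgroup U G" and N: "subgroup N G" and g: "g \<in> carrier G"
  shows "g \<in> U <#> N \<longleftrightarrow> U \<inter> (g <# N) \<noteq> {}"
proof
  assume "g \<in> U <#> N"
  then obtain u n where un: "u \<in> U" "n \<in> N" "g = u \<otimes> n" by (rule set_multE)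
  have "u = g \<otimes> inv n"
    using un subgroup.mem_carrier[OF U un(1)] subgroup.mem_carrier[OF N un(2)] by (simp add: m_assoc)
  then show "U \<inter> (g <# N) \<noteq> {}"
    using un(1) subgroup.m_inv_closed[OF N un(2)] unfolding l_coset_def by blast
next
  assume "U \<inter> (g <# N) \<noteq> {}"
  then obtain u n where un: "u \<in> U" "n \<in> N" "u = g \<otimes> n" unfolding l_coset_def by blast
  have "g = u \<otimes> inv n"
    using un g subgroup.mem_carrier[OF N un(2)] by (simp add: m_assoc)
  then show "g \<in> U <#> N" using un(1) subgroup.m_inv_closed[OF N un(2)] by (rule set_multI[rotated 2])
qed

lemma (in group) inv_mult_mem_sym:
  assumes "subgroup H G" "a \<in> carrier G" "b \<in> carrier G" "inv a \<otimes> b \<in> H"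
  shows "inv b \<otimes> a \<in> H"
  using subgroup.m_inv_closed[OF assms(1,4)] assms(2,3) by (simp add: inv_mult_group)

lemma (in group) inv_mult_mem_trans:
  assumes "subgroup H G" "a \<in> carrier G" "b \<in> carrier G" "c \<in> carrier G"
    and "inv a \<otimes> b \<in> H" "inv b \<otimes> c \<in> H"
  shows "inv a \<otimes> c \<in> H"
proof -
  have "b \<otimes> (inv b \<otimes> c) = c" using assms(3,4) by (simp add: m_assoc[symmetric])
  then show ?thesis using subgroup.m_closed[OF assms(1,5,6)] assms(2-4) by (simp add: m_assoc)
qed

lemma (in group) inv_mult_mem_iff_of_l_coset_reps:
  assumes H: "subgroup H G" and UH: "U \<subseteq> H"
    and c: "w \<in> carrier G" "w' \<in> carrier G" "r \<in> carrier G" "r' \<in> carrier G"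
    and a: "inv r \<otimes> w \<in> U" and b: "inv r' \<otimes> w' \<in> U"
  shows "inv w \<otimes> w' \<in> H \<longleftrightarrow> inv r \<otimes> r' \<in> H"
proof -
  have "inv w \<otimes> r \<in> H" using inv_mult_mem_sym[OF H c(3,1)] a UH by blast
  moreover have "inv r' \<otimes> w' \<in> H" using b UH by blast
  moreover have "inv r \<otimes> w \<in> H" using a UH by blast
  moreover have "inv w' \<otimes> r' \<in> H" using inv_mult_mem_sym[OF H c(4,2)] b UH by blast
  ultimately show ?thesis using inv_mult_mem_trans[OF H] c by meson
qed

section \<open>Topological groups\<close>

locale topgroup = group G for G (structure) +
  fixes T :: "'a topology"
  assumes topspace_eq: "topspace T = carrier G"
    and continuous_mult: "continuous_map (prod_topology T T) T (\<lambda>(x, y). x \<otimes> y)"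
    and continuous_inv: "continuous_map T T (\<lambda>x. inv x)"
begin

lemma continuous_map_group_mult:
  assumes "continuous_map T T f" "continuous_map T T g"
  shows "continuous_map T T (\<lambda>x. f x \<otimes> g x)"
proof -
  have "continuous_map T (prod_topology T T) (\<lambda>x. (f x, g x))"
    using assms by (simp add: continuous_map_paired)
  from continuous_map_compose[OF this continuous_mult] show ?thesis by (simp add: o_def)
qed

lemma continuous_map_left_translation: "c \<in> carrier G \<Longrightarrow> continuous_map T T (\<lambda>x. c \<otimes> x)"
  by (intro continuous_map_group_mult) (auto simp: topspace_eq continuous_map_id[unfolded id_def])

lemma continuous_map_right_translation: "c \<in> carrier G \<Longrightarrow> continuous_map T T (\<lambda>x. x \<otimes> c)"
  by (intro continuous_map_group_mult) (auto simp: topspace_eq continuous_map_id[unfolded id_def])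

lemma continuous_map_conjugation: "c \<in> carrier G \<Longrightarrow> continuous_map T T (\<lambda>x. c \<otimes> x \<otimes> inv c)"
  by (intro continuous_map_group_mult continuous_map_left_translation) (auto simp: topspace_eq)

lemma l_coset_eq_preimage:
  assumes "g \<in> carrier G" "A \<subseteq> carrier G"
  shows "g <# A = {x \<in> topspace T. inv g \<otimes> x \<in> A}"
proof -
  have "x \<in> g <# A \<longleftrightarrow> x \<in> carrier G \<and> inv g \<otimes> x \<in> A" for x
  proof
    assume "x \<in> g <# A"
    then obtain a where a: "a \<in> A" "x = g \<otimes> a" unfolding l_coset_def by auto
    then show "x \<in> carrier G \<and> inv g \<otimes> x \<in> A" using assms
      by (auto simp: m_assoc[symmetric])
  next
    assume x: "x \<in> carrier G \<and> inv g \<otimes> x \<in> A"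
    then have "x = g \<otimes> (inv g \<otimes> x)" using assms by (simp add: m_assoc[symmetric])
    with x show "x \<in> g <# A" unfolding l_coset_def by blast
  qed
  then show ?thesis using topspace_eq by auto
qed

lemma r_coset_eq_preimage:
  assumes "g \<in> carrier G" "A \<subseteq> carrier G"
  shows "A #> g = {x \<in> topspace T. x \<otimes> inv g \<in> A}"
proof -
  have "x \<in> A #> g \<longleftrightarrow> x \<in> carrier G \<and> x \<otimes> inv g \<in> A" for x
  proof
    assume "x \<in> A #> g"
    then obtain a where a: "a \<in> A" "x = a \<otimes> g" unfolding r_coset_def by auto
    then show "x \<in> carrier G \<and> x \<otimes> inv g \<in> A" using assms
      by (auto simp: m_assoc)
  next
    assume x: "x \<in> carrier G \<and> x \<otimes> inv g \<in> A"
    then have "x = (x \<otimes> inv g) \<otimes> g" using assms by (simp add: m_assoc)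
    with x show "x \<in> A #> g" unfolding r_coset_def by blast
  qed
  then show ?thesis using topspace_eq by auto
qed

lemma openin_l_coset: "openin T A \<Longrightarrow> g \<in> carrier G \<Longrightarrow> openin T (g <# A)"
  using openin_subset[of T A] l_coset_eq_preimage[of g A] topspace_eq
    openin_continuous_map_preimage[OF continuous_map_left_translation[of "inv g"]] by simp

lemma closedin_l_coset: "closedin T A \<Longrightarrow> g \<in> carrier G \<Longrightarrow> closedin T (g <# A)"
  using closedin_subset[of T A] l_coset_eq_preimage[of g A] topspace_eq
    closedin_continuous_map_preimage[OF continuous_map_left_translation[of "inv g"]] by simp

lemma openin_r_coset: "openin T A \<Longrightarrow> g \<in> carrier G \<Longrightarrow> openin T (A #> g)"
  using openin_subset[of T A] r_coset_eq_preimage[of g A] topspace_eq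
    openin_continuous_map_preimage[OF continuous_map_right_translation[of "inv g"]] by simp

lemma closedin_open_subgroup:
  assumes "subgroup H G" "openin T H"
  shows "closedin T H"
proof -
  have "topspace T - H = (\<Union>g\<in>carrier G - H. g <# H)"
  proof
    show "topspace T - H \<subseteq> (\<Union>g\<in>carrier G - H. g <# H)"
    proof
      fix x assume "x \<in> topspace T - H"
      then have x: "x \<in> carrier G - H" using topspace_eq by auto
      have "x \<otimes> \<one> \<in> x <# H" unfolding l_coset_def using subgroup.one_closed[OF assms(1)] by blast
      with x show "x \<in> (\<Union>g\<in>carrier G - H. g <# H)" by auto
    qed
    show "(\<Union>g\<in>carrier G - H. g <# H) \<subseteq> topspace T - H"
    proof clarify
      fix g x assume g: "g \<in> carrier G" "g \<notin> H" and "x \<in> g <# H"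
      then obtain h where h: "h \<in> H" "x = g \<otimes> h" unfolding l_coset_def by auto
      have hc: "h \<in> carrier G" using h assms(1) subgroup.subset by blast
      have "x \<notin> H"
      proof
        assume "x \<in> H"
        then have "x \<otimes> inv h \<in> H" using h(1) assms(1) by (simp add: subgroup.m_closed subgroup.m_inv_closed)
        also have "x \<otimes> inv h = g" unfolding h(2) using g(1) hc by (simp add: m_assoc)
        finally show False using g by simp
      qed
      then show "x \<in> topspace T - H" using h(2) g(1) hc topspace_eq by simp
    qed
  qed
  moreover have "openin T (\<Union>g\<in>carrier G - H. g <# H)"
    using openin_l_coset assms by auto
  ultimately show ?thesis
    using openin_subset[OF assms(2)] unfolding closedin_def by simp
qed

lemma image_closure_of_subset:
  assumes "continuous_map T T f" "f ` A \<subseteq> A"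
  shows "f ` (T closure_of A) \<subseteq> T closure_of A"
  using continuous_map_image_closure_subset[OF assms(1)] closure_of_mono[OF assms(2)] by blast

lemma subgroup_closure_of:
  assumes A: "subgroup A G"
  shows "subgroup (T closure_of A) G"
proof (rule subgroupI)
  show "T closure_of A \<subseteq> carrier G"
    using closure_of_subset_topspace[of T A] topspace_eq by simp
  have "A \<subseteq> T closure_of A"
    using A topspace_eq by (simp add: closure_of_subset subgroup.subset)
  then show "T closure_of A \<noteq> {}" using subgroup.one_closed[OF A] by blast
next
  fix a assume "a \<in> T closure_of A"
  moreover have "(\<lambda>x. inv x) ` A \<subseteq> A" using subgroup.m_inv_closed[OF A] by blast
  ultimately show "inv a \<in> T closure_of A"
    using image_closure_of_subset[OF continuous_inv] by blast
next
  fix a b assume "a \<in> T closure_of A" "b \<in> T closure_of A"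
  then have "(a, b) \<in> prod_topology T T closure_of (A \<times> A)" by (simp add: closure_of_Times)
  then have "(\<lambda>(x, y). x \<otimes> y) (a, b) \<in> T closure_of ((\<lambda>(x, y). x \<otimes> y) ` (A \<times> A))"
    using continuous_map_image_closure_subset[OF continuous_mult] by blast
  moreover have "(\<lambda>(x, y). x \<otimes> y) ` (A \<times> A) \<subseteq> A" using subgroup.m_closed[OF A] by auto
  ultimately show "a \<otimes> b \<in> T closure_of A" using closure_of_mono by fastforce
qed

lemma normal_closure_of:
  assumes A: "A \<lhd> G"
  shows "T closure_of A \<lhd> G"
proof -
  have "x \<otimes> h \<otimes> inv x \<in> T closure_of A" if x: "x \<in> carrier G" and h: "h \<in> T closure_of A" for x h
  proof -
    have "(\<lambda>y. x \<otimes> y \<otimes> inv x) ` A \<subseteq> A" using normal.inv_op_closed2[OF A x] by blast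
    then show ?thesis
      using image_closure_of_subset[OF continuous_map_conjugation[OF x]] h by blast
  qed
  then show ?thesis
    using subgroup_closure_of[OF normal_imp_subgroup[OF A]] normal_inv_iff by blast
qed

lemma exists_open_nbhd_one_mult_subset:
  assumes V: "openin T V" "compactin T V"
  shows "\<exists>W. openin T W \<and> \<one> \<in> W \<and> (\<forall>v\<in>V. \<forall>w\<in>W. v \<otimes> w \<in> V)"
proof -
  define P where "P = {p \<in> topspace (prod_topology T T). (\<lambda>(x, y). x \<otimes> y) p \<in> V}"
  have P: "openin (prod_topology T T) P"
    unfolding P_def by (rule openin_continuous_map_preimage[OF continuous_mult V(1)])
  have VP: "V \<times> {\<one>} \<subseteq> P"
    unfolding P_def using openin_subset[OF V(1)] topspace_eq by auto
  have one: "\<one> \<in> topspace T" using topspace_eq by simp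
  obtain V' W where W: "openin T V'" "openin T W" "V \<subseteq> V'" "\<one> \<in> W" "V' \<times> W \<subseteq> P"
    using tube_lemma_left[OF P V(2) one VP] by blast
  have "v \<otimes> w \<in> V" if "v \<in> V" "w \<in> W" for v w
  proof -
    have "(v, w) \<in> P" using W(3,5) that by blast
    then show ?thesis unfolding P_def by simp
  qed
  then show ?thesis using W(2,4) by blast
qed

lemma compact_open_subgroup_exists:
  assumes "Hausdorff_space T" "locally_compact_space T" "totally_disconnected_space T"
  shows "\<exists>U. subgroup U G \<and> openin T U \<and> compactin T U"
proof -
  obtain V where V: "openin T V" "compactin T V" "\<one> \<in> V"
    using totally_disconnected_compact_open_nbhd[OF assms] topspace_eq by auto
  have Vcar: "V \<subseteq> carrier G" using openin_subset[OF V(1)] topspace_eq by simp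
  obtain W0 where W0: "openin T W0" "\<one> \<in> W0" "\<forall>v\<in>V. \<forall>w\<in>W0. v \<otimes> w \<in> V"
    using exists_open_nbhd_one_mult_subset[OF V(1,2)] by blast
  define W where "W = W0 \<inter> {x \<in> topspace T. inv x \<in> W0}"
  have Wo: "openin T W" unfolding W_def
    using W0(1) openin_continuous_map_preimage[OF continuous_inv W0(1)] by blast
  have oW: "\<one> \<in> W" unfolding W_def using W0(2) topspace_eq by simp
  \<comment> \<open>The right stabiliser of \<open>V\<close> contains the neighbourhood \<open>W\<close> of \<open>\<one>\<close>, so it is open,
    and it lies in \<open>V\<close> because \<open>\<one> \<in> V\<close>.\<close>
  define U where "U = {g \<in> carrier G. \<forall>v\<in>V. v \<otimes> g \<in> V \<and> v \<otimes> inv g \<in> V}"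
  have Usub: "subgroup U G" unfolding U_def by (rule subgroup_right_stabilizer[OF Vcar])
  have WU: "W \<subseteq> U" unfolding U_def W_def using W0(3) topspace_eq by auto
  have "\<exists>T'. openin T T' \<and> g \<in> T' \<and> T' \<subseteq> U" if g: "g \<in> U" for g
  proof (intro exI conjI)
    have gc: "g \<in> carrier G" using g unfolding U_def by blast
    show "openin T (g <# W)" using openin_l_coset[OF Wo gc] .
    show "g \<in> g <# W" using oW gc unfolding l_coset_def by force
    show "g <# W \<subseteq> U"
      using WU subgroup.m_closed[OF Usub g] unfolding l_coset_def by blast
  qed
  then have Uo: "openin T U" by (subst openin_subopen) blast
  have "U \<subseteq> V" unfolding U_def using V(3) by fastforce
  then have "compactin T U"
    using closed_compactin[OF V(2)] closedin_open_subgroup[OF Usub Uo] by blast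
  then show ?thesis using Usub Uo by blast
qed

lemma closed_normal_carrier: "closed_normal G T (carrier G)"
  unfolding closed_normal_def using normal_self topspace_eq closedin_topspace[of T] by simp

lemma openin_set_mult:
  assumes "openin T H" "N \<subseteq> carrier G"
  shows "openin T (H <#> N)"
proof -
  have "H <#> N = (\<Union>n\<in>N. H #> n)" unfolding set_mult_def r_coset_def by blast
  moreover have "openin T (\<Union>n\<in>N. H #> n)"
    by (rule openin_Union) (use openin_r_coset[OF assms(1)] assms(2) in blast)
  ultimately show ?thesis by simp
qed

lemma closure_of_subset_set_mult:
  assumes U: "subgroup U G" "openin T U" and A: "A \<subseteq> carrier G"
  shows "T closure_of A \<subseteq> U <#> A"
proof
  fix x assume x: "x \<in> T closure_of A"
  have "x \<in> topspace T" using x closure_of_subset_topspace by (rule subsetD[rotated])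
  then have xc: "x \<in> carrier G" using topspace_eq by simp
  have "\<forall>V. x \<in> V \<and> openin T V \<longrightarrow> (\<exists>y. y \<in> A \<and> y \<in> V)"
    using x unfolding in_closure_of by (rule conjunct2)
  then have "\<exists>y. y \<in> A \<and> y \<in> U #> x"
    using rcos_self[OF xc U(1)] openin_r_coset[OF U(2) xc] by simp
  then obtain a where a: "a \<in> A" "a \<in> U #> x" by blast
  then obtain u where u: "u \<in> U" "a = u \<otimes> x" unfolding r_coset_def by blast
  have uc: "u \<in> carrier G" using subgroup.mem_carrier[OF U(1) u(1)] .
  have "x = inv u \<otimes> a" unfolding u(2) using uc xc by (simp add: m_assoc[symmetric])
  moreover have "inv u \<in> U" using subgroup.m_inv_closed[OF U(1) u(1)] .
  ultimately show "x \<in> U <#> A" using a(1) by (blast intro: set_multI)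
qed

lemma set_mult_closure_of:
  assumes U: "subgroup U G" "openin T U" and A: "A \<subseteq> carrier G"
  shows "U <#> (T closure_of A) = U <#> A"
proof
  have "A \<subseteq> T closure_of A" using A topspace_eq closure_of_subset[of A T] by simp
  then show "U <#> A \<subseteq> U <#> (T closure_of A)" by (rule mono_set_mult[OF subset_refl])
  have "U <#> (T closure_of A) \<subseteq> U <#> (U <#> A)"
    by (rule mono_set_mult[OF subset_refl closure_of_subset_set_mult[OF assms]])
  also have "\<dots> = U <#> A"
    using set_mult_assoc[of U U A] subgroup_mult_id[OF U(1)] subgroup.subset[OF U(1)] A by simp
  finally show "U <#> (T closure_of A) \<subseteq> U <#> A" .
qed

lemma set_mult_Inter_chain:
  assumes U: "subgroup U G" "compactin T U" and g: "g \<in> carrier G" "\<And>N. N \<in> \<C> \<Longrightarrow> g \<in> U <#> N"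
    and \<C>: "\<forall>N\<in>\<C>. subgroup N G \<and> closedin T N" "\<forall>X\<in>\<C>. \<forall>Y\<in>\<C>. X \<subseteq> Y \<or> Y \<subseteq> X" "\<C> \<noteq> {}"
  shows "g \<in> U <#> \<Inter>\<C>"
proof -
  have "U \<inter> (g <# N) \<noteq> {}" if "N \<in> \<C>" for N
    using set_mult_iff_Int_l_coset[OF U(1) _ g(1)] g(2) \<C>(1) that by blast
  moreover have "closedin T (g <# N)" if "N \<in> \<C>" for N
  proof -
    have "closedin T N" using \<C>(1) that by blast
    then show ?thesis by (rule closedin_l_coset[OF _ g(1)])
  qed
  moreover have mono: "g <# N \<subseteq> g <# N'" if "N \<subseteq> N'" for N N'
    using that unfolding l_coset_def by blast
  ultimately have "subset.chain {A. closedin T A \<and> U \<inter> A \<noteq> {}} ((\<lambda>N. g <# N) ` \<C>)"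
    unfolding subset_chain_def
  proof (intro conjI image_subsetI CollectI ballI)
    fix X Y assume "X \<in> (\<lambda>N. g <# N) ` \<C>" "Y \<in> (\<lambda>N. g <# N) ` \<C>"
    then obtain N N' where "N \<in> \<C>" "N' \<in> \<C>" "X = g <# N" "Y = g <# N'" by blast
    moreover have "N \<subseteq> N' \<or> N' \<subseteq> N" using \<C>(2) \<open>N \<in> \<C>\<close> \<open>N' \<in> \<C>\<close> by blast
    ultimately show "X \<subseteq> Y \<or> Y \<subseteq> X" using mono by blast
  qed
  then have "U \<inter> \<Inter>((\<lambda>N. g <# N) ` \<C>) \<noteq> {}"
    using compactin_Inter_chain_nonempty[OF U(2)] \<C>(3) by blast
  moreover have "\<Inter>((\<lambda>N. g <# N) ` \<C>) = g <# \<Inter>\<C>"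
  proof -
    have sub: "subgroup (\<Inter>\<C>) G" using \<C>(1,3) by (intro subgroups_Inter) auto
    have "N \<subseteq> carrier G" if "N \<in> \<C>" for N using \<C>(1) that subgroup.subset by blast
    then have "\<Inter>((\<lambda>N. g <# N) ` \<C>) = (\<Inter>N\<in>\<C>. {x \<in> topspace T. inv g \<otimes> x \<in> N})"
      using l_coset_eq_preimage[OF g(1)] by simp
    also have "\<dots> = {x \<in> topspace T. inv g \<otimes> x \<in> \<Inter>\<C>}" using \<C>(3) by blast
    finally show ?thesis using l_coset_eq_preimage[OF g(1) subgroup.subset[OF sub]] by simp
  qed
  ultimately show ?thesis
    using set_mult_iff_Int_l_coset[OF U(1) _ g(1)] \<C> by (simp add: subgroups_Inter)
qed

lemma topspace_subtopology_subgroup: "subgroup M G \<Longrightarrow> topspace (subtopology T M) = M"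
  using subgroup.subset topspace_eq by force

lemma quotient_factor_topology_compact:
  assumes U: "subgroup U G" "openin T U" "compactin T U" and K: "K \<lhd> G"
    and M: "subgroup M G" "closedin T M" and KM: "K \<subseteq> M" and MUK: "M \<subseteq> U <#> K"
  shows "compact_space (quotient_factor_topology G T M K)"
  unfolding quotient_factor_topology_def
proof (rule compact_space_quotient_topology)
  have "closedin T (U \<inter> M)" using closedin_open_subgroup[OF U(1,2)] M(2) by blast
  then show "compactin (subtopology T M) (U \<inter> M)"
    using closed_compactin[OF U(3)] by (auto simp: compactin_subtopology)
  have "K #> x \<in> (\<lambda>x. K #> x) ` (U \<inter> M)" if x: "x \<in> M" for x
  proof -
    obtain u k where uk: "u \<in> U" "k \<in> K" "x = u \<otimes> k" using MUK x by (blast elim: set_multE)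
    have c: "u \<in> carrier G" "k \<in> carrier G"
      using subgroup.mem_carrier[OF U(1) uk(1)] subgroup.mem_carrier[OF normal_imp_subgroup[OF K] uk(2)]
      by auto
    have "x \<otimes> inv k \<in> M"
      using KM uk(2) x M(1) by (simp add: subset_iff subgroup.m_closed subgroup.m_inv_closed)
    then have uM: "u \<in> M" using c uk(3) by (simp add: m_assoc)
    have "u \<otimes> k \<otimes> inv u \<in> K" using normal.inv_op_closed2[OF K c(1) uk(2)] .
    moreover have "x = (u \<otimes> k \<otimes> inv u) \<otimes> u" using c uk(3) by (simp add: m_assoc)
    ultimately have "x \<in> K #> u" unfolding r_coset_def by blast
    then have "K #> x = K #> u" using repr_independence[OF _ c(1) normal_imp_subgroup[OF K]] by simp
    then show ?thesis using uk(1) uM by blast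
  qed
  then show "(\<lambda>x. K #> x) ` topspace (subtopology T M) \<subseteq> (\<lambda>x. K #> x) ` (U \<inter> M)"
    using topspace_subtopology_subgroup[OF M(1)] by auto
qed

lemma quotient_factor_topology_discrete:
  assumes L: "subgroup L G" and H: "openin T H" and LH: "subgroup (L \<inter> H) G"
  shows "quotient_factor_topology G T L (L \<inter> H) =
           discrete_topology (topspace (quotient_factor_topology G T L (L \<inter> H)))"
  unfolding quotient_factor_topology_def
proof (rule quotient_topology_discrete)
  fix x assume "x \<in> topspace (subtopology T L)"
  then have x: "x \<in> L" using topspace_subtopology_subgroup[OF L] by simp
  have xc: "x \<in> carrier G" using subgroup.mem_carrier[OF L x] .
  have Hc: "H \<subseteq> carrier G" using openin_subset[OF H] topspace_eq by simp
  have "{y \<in> L. (L \<inter> H) #> y = (L \<inter> H) #> x} = (L \<inter> H) #> x"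
  proof (rule Set.set_eqI, rule iffI)
    fix y assume "y \<in> {y \<in> L. (L \<inter> H) #> y = (L \<inter> H) #> x}"
    then show "y \<in> (L \<inter> H) #> x" using rcos_self[OF _ LH] subgroup.mem_carrier[OF L] by force
  next
    fix y assume y: "y \<in> (L \<inter> H) #> x"
    then have "y \<in> L" using r_coset_Int_subgroup[OF L Hc x] by blast
    then show "y \<in> {y \<in> L. (L \<inter> H) #> y = (L \<inter> H) #> x}"
      using repr_independence[OF y xc LH] by simp
  qed
  also have "\<dots> = L \<inter> (H #> x)" by (rule r_coset_Int_subgroup[OF L Hc x])
  finally show "openin (subtopology T L) {y \<in> topspace (subtopology T L). (L \<inter> H) #> y = (L \<inter> H) #> x}"
    using openin_subtopology_Int2[OF openin_r_coset[OF H xc]] topspace_subtopology_subgroup[OF L]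
    by (simp add: Int_commute)
qed

end

section \<open>The cover index of a normal subgroup\<close>

locale tdlc_generated = topgroup +
  fixes U K0 :: "'a set"
  assumes U_subgroup: "subgroup U G" and U_open: "openin T U" and U_compact: "compactin T U"
    and K0_carrier: "K0 \<subseteq> carrier G" and K0_compact: "compactin T K0"
    and K0_generates: "generate G K0 = carrier G"
begin

definition gens :: "'a set" where "gens = K0 \<union> (\<lambda>x. inv x) ` K0"

lemma gens_carrier: "gens \<subseteq> carrier G"
  unfolding gens_def using K0_carrier by auto

lemma compactin_U_gens: "compactin T (U <#> gens)"
proof -
  have "compactin T ((\<lambda>x. inv x) ` K0)" by (rule image_compactin[OF K0_compact continuous_inv])
  then have "compactin T gens" unfolding gens_def using K0_compact by (simp add: compactin_Un)
  then have "compactin (prod_topology T T) (U \<times> gens)" using U_compact by (simp add: compactin_Times)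
  from image_compactin[OF this continuous_mult]
  have "compactin T ((\<lambda>(x, y). x \<otimes> y) ` (U \<times> gens))" .
  moreover have "(\<lambda>(x, y). x \<otimes> y) ` (U \<times> gens) = U <#> gens" unfolding set_mult_def by auto
  ultimately show ?thesis by simp
qed

lemma finite_left_U_cover:
  "\<exists>R. finite R \<and> R \<subseteq> carrier G \<and> (\<forall>w\<in>U <#> gens. \<exists>r\<in>R. inv r \<otimes> w \<in> U)"
proof -
  have Wc: "U <#> gens \<subseteq> carrier G"
    using setmult_subset_G[OF subgroup.subset[OF U_subgroup] gens_carrier] .
  have "\<forall>X\<in>(\<lambda>w. w <# U) ` (U <#> gens). openin T X" using openin_l_coset[OF U_open] Wc by blast
  moreover have "U <#> gens \<subseteq> \<Union>((\<lambda>w. w <# U) ` (U <#> gens))"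
    using Wc subgroup.one_closed[OF U_subgroup] unfolding l_coset_def by force
  ultimately obtain \<F> where \<F>: "finite \<F>" "\<F> \<subseteq> (\<lambda>w. w <# U) ` (U <#> gens)" "U <#> gens \<subseteq> \<Union>\<F>"
    using compactin_U_gens unfolding compactin_def by meson
  then obtain R where R: "R \<subseteq> U <#> gens" "finite R" "\<F> = (\<lambda>w. w <# U) ` R"
    by (meson finite_subset_image)
  have "\<exists>r\<in>R. inv r \<otimes> w \<in> U" if w: "w \<in> U <#> gens" for w
  proof -
    obtain r where r: "r \<in> R" "w \<in> r <# U" using \<F> R w by blast
    then obtain u where u: "u \<in> U" "w = r \<otimes> u" unfolding l_coset_def by blast
    have "r \<in> carrier G" "u \<in> carrier G" using r(1) R(1) Wc subgroup.mem_carrier[OF U_subgroup u(1)] by auto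
    then have "inv r \<otimes> w = u" unfolding u(2) by (simp add: m_assoc[symmetric])
    then show ?thesis using r(1) u(1) by auto
  qed
  then show ?thesis using R Wc by blast
qed

definition R :: "'a set" where
  "R = (SOME R. finite R \<and> R \<subseteq> carrier G \<and> (\<forall>w\<in>U <#> gens. \<exists>r\<in>R. inv r \<otimes> w \<in> U))"

lemma R_cover: "finite R" "R \<subseteq> carrier G" "\<And>w. w \<in> U <#> gens \<Longrightarrow> \<exists>r\<in>R. inv r \<otimes> w \<in> U"
  using someI_ex[OF finite_left_U_cover] unfolding R_def[symmetric] by blast+

lemma subgroup_U_set_mult: "N \<lhd> G \<Longrightarrow> subgroup (U <#> N) G"
  by (rule subgroup_set_mult_normal[OF U_subgroup])

lemma U_subset_set_mult: "N \<lhd> G \<Longrightarrow> U \<subseteq> U <#> N"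
  using subset_set_mult_subgroup(1)[OF U_subgroup normal_imp_subgroup] .

lemma subset_U_set_mult: "N \<lhd> G \<Longrightarrow> N \<subseteq> U <#> N"
  using subset_set_mult_subgroup(2)[OF U_subgroup normal_imp_subgroup] .

lemma openin_U_set_mult: "N \<lhd> G \<Longrightarrow> openin T (U <#> N)"
  using openin_set_mult[OF U_open] normal_imp_subgroup subgroup.subset by blast

lemma closedin_U_set_mult: "N \<lhd> G \<Longrightarrow> closedin T (U <#> N)"
  using closedin_open_subgroup[OF subgroup_U_set_mult openin_U_set_mult] .

definition cover_class :: "'a set \<Rightarrow> 'a \<Rightarrow> 'a set" where
  "cover_class N r = {r' \<in> R. inv r \<otimes> r' \<in> U <#> N}"

definition cover_index :: "'a set \<Rightarrow> nat" where
  "cover_index N = card (cover_class N ` R)"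

lemma cover_class_eq_iff:
  assumes N: "N \<lhd> G" and r: "r \<in> R" and r': "r' \<in> R"
  shows "cover_class N r = cover_class N r' \<longleftrightarrow> inv r \<otimes> r' \<in> U <#> N"
proof
  have H: "subgroup (U <#> N) G" using subgroup_U_set_mult[OF N] .
  have c: "r \<in> carrier G" "r' \<in> carrier G" using r r' R_cover(2) by auto
  show "inv r \<otimes> r' \<in> U <#> N" if "cover_class N r = cover_class N r'"
  proof -
    have "inv r' \<otimes> r' \<in> U <#> N" using c(2) subgroup.one_closed[OF H] by simp
    then have "r' \<in> cover_class N r'" unfolding cover_class_def using r' by blast
    then show ?thesis using that unfolding cover_class_def by blast
  qed
  show "cover_class N r = cover_class N r'" if rr': "inv r \<otimes> r' \<in> U <#> N"
  proof -
    have "inv r' \<otimes> r \<in> U <#> N" using inv_mult_mem_sym[OF H c rr'] .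
    then show ?thesis
      using inv_mult_mem_trans[OF H] c rr' R_cover(2) unfolding cover_class_def by blast
  qed
qed

lemma cover_class_factor:
  assumes "K \<lhd> G" "L \<lhd> G" "K \<subseteq> L"
  shows "\<forall>r\<in>R. \<forall>r'\<in>R. cover_class K r = cover_class K r' \<longrightarrow> cover_class L r = cover_class L r'"
  using cover_class_eq_iff[OF assms(1)] cover_class_eq_iff[OF assms(2)]
    mono_set_mult[OF subset_refl[of U] assms(3), where G = G] by blast

lemma cover_index_antimono:
  assumes "K \<lhd> G" "L \<lhd> G" "K \<subseteq> L"
  shows "cover_index L \<le> cover_index K"
  unfolding cover_index_def by (rule card_image_le_if_factors[OF R_cover(1) cover_class_factor[OF assms]])

lemma mem_set_mult_of_cover_index_eq:
  assumes K: "K \<lhd> G" and L: "L \<lhd> G" and KL: "K \<subseteq> L" and eq: "cover_index K = cover_index L"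
    and r: "r \<in> R" "r' \<in> R" and rr': "inv r \<otimes> r' \<in> U <#> L"
  shows "inv r \<otimes> r' \<in> U <#> K"
proof -
  have "cover_class L r = cover_class L r'" using cover_class_eq_iff[OF L r] rr' by blast
  then have "cover_class K r = cover_class K r'"
    using eq_if_card_image_eq_factors[OF R_cover(1) cover_class_factor[OF K L KL] _ r]
      eq[unfolded cover_index_def] by simp
  then show ?thesis using cover_class_eq_iff[OF K r] by blast
qed

lemma cover_index_cong:
  assumes "\<And>r r'. r \<in> R \<Longrightarrow> r' \<in> R \<Longrightarrow> inv r \<otimes> r' \<in> U <#> N \<longleftrightarrow> inv r \<otimes> r' \<in> U <#> M"
  shows "cover_index N = cover_index M"
proof -
  have "cover_class N r = cover_class M r" if "r \<in> R" for r
    unfolding cover_class_def using assms that by blast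
  then show ?thesis unfolding cover_index_def by (metis image_cong)
qed

lemma conj_gen_mem_U_set_mult:
  assumes K: "K \<lhd> G" and L: "L \<lhd> G" and KL: "K \<subseteq> L" and eq: "cover_index K = cover_index L"
    and u: "u \<in> U" "u \<in> L" and s: "s \<in> gens"
  shows "inv s \<otimes> (u \<otimes> s) \<in> U <#> K"
proof -
  have c: "s \<in> carrier G" "u \<in> carrier G"
    using s gens_carrier subgroup.mem_carrier[OF U_subgroup u(1)] by auto
  have "s \<in> U <#> gens" by (rule set_multI[OF subgroup.one_closed[OF U_subgroup] s]) (use c in simp)
  then obtain r where r: "r \<in> R" "inv r \<otimes> s \<in> U" using R_cover(3) by blast
  have "u \<otimes> s \<in> U <#> gens" by (rule set_multI[OF u(1) s refl])
  then obtain r' where r': "r' \<in> R" "inv r' \<otimes> (u \<otimes> s) \<in> U" using R_cover(3) by blast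
  have rc: "r \<in> carrier G" "r' \<in> carrier G" using r(1) r'(1) R_cover(2) by auto
  \<comment> \<open>\<open>s\<close> and \<open>u s\<close> lie in \<open>r U\<close> and \<open>r' U\<close>; membership of \<open>r\<inverse> r'\<close> in \<open>U L\<close> descends to \<open>U K\<close>
    because the indices agree.\<close>
  have "inv s \<otimes> u \<otimes> s \<in> L" by (rule normal.inv_op_closed1[OF L c(1) u(2)])
  then have "inv s \<otimes> (u \<otimes> s) \<in> U <#> L" using subset_U_set_mult[OF L] c by (auto simp: m_assoc)
  then have "inv r \<otimes> r' \<in> U <#> L"
    using inv_mult_mem_iff_of_l_coset_reps[OF subgroup_U_set_mult[OF L] U_subset_set_mult[OF L] _ _ rc r(2) r'(2)] c
    by simp
  then have "inv r \<otimes> r' \<in> U <#> K" by (rule mem_set_mult_of_cover_index_eq[OF K L KL eq r(1) r'(1)])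
  then show ?thesis
    using inv_mult_mem_iff_of_l_coset_reps[OF subgroup_U_set_mult[OF K] U_subset_set_mult[OF K] _ _ rc r(2) r'(2)] c
    by simp
qed

lemma normal_Int_U_set_mult:
  assumes K: "K \<lhd> G" and L: "L \<lhd> G" and KL: "K \<subseteq> L" and eq: "cover_index K = cover_index L"
  shows "L \<inter> (U <#> K) \<lhd> G"
proof (rule normal_if_conj_generators[OF _ K0_generates])
  show "subgroup (L \<inter> (U <#> K)) G"
    by (rule subgroups_Inter_pair[OF normal_imp_subgroup[OF L] subgroup_U_set_mult[OF K]])
next
  fix s x assume "s \<in> K0 \<union> (\<lambda>x. inv x) ` K0" and x: "x \<in> L \<inter> (U <#> K)"
  then have s: "s \<in> gens" and sc: "s \<in> carrier G" unfolding gens_def using K0_carrier by auto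
  obtain u k where uk: "u \<in> U" "k \<in> K" "x = u \<otimes> k" using x by (blast elim: set_multE)
  have c: "u \<in> carrier G" "k \<in> carrier G"
    using subgroup.mem_carrier[OF U_subgroup uk(1)] subgroup.mem_carrier[OF normal_imp_subgroup[OF K] uk(2)]
    by auto
  have "x \<otimes> inv k \<in> L"
    using x uk(2) KL normal_imp_subgroup[OF L] by (auto intro: subgroup.m_closed subgroup.m_inv_closed)
  then have "u \<in> L" using uk(3) c by (simp add: m_assoc)
  then have "inv s \<otimes> (u \<otimes> s) \<in> U <#> K" by (rule conj_gen_mem_U_set_mult[OF K L KL eq uk(1) _ s])
  moreover have "inv s \<otimes> k \<otimes> s \<in> U <#> K"
    using normal.inv_op_closed1[OF K sc uk(2)] subset_U_set_mult[OF K] by blast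
  ultimately have "(inv s \<otimes> (u \<otimes> s)) \<otimes> (inv s \<otimes> k \<otimes> s) \<in> U <#> K"
    by (rule subgroup.m_closed[OF subgroup_U_set_mult[OF K]])
  moreover have "(inv s \<otimes> (u \<otimes> s)) \<otimes> (inv s \<otimes> k \<otimes> s) = inv s \<otimes> x \<otimes> s"
  proof -
    have "s \<otimes> (inv s \<otimes> (k \<otimes> s)) = k \<otimes> s" using sc c by (simp add: m_assoc[symmetric])
    then show ?thesis using uk(3) sc c by (simp add: m_assoc)
  qed
  moreover have "inv s \<otimes> x \<otimes> s \<in> L" using normal.inv_op_closed1[OF L sc] x by blast
  ultimately show "inv s \<otimes> x \<otimes> s \<in> L \<inter> (U <#> K)" by simp
qed

lemma cover_index_closure_Union_chain:
  assumes \<C>: "\<forall>N\<in>\<C>. N \<lhd> G" "\<forall>X\<in>\<C>. \<forall>Y\<in>\<C>. X \<subseteq> Y \<or> Y \<subseteq> X" "\<C> \<noteq> {}"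
  shows "\<exists>N0\<in>\<C>. cover_index (T closure_of \<Union>\<C>) = cover_index N0"
proof -
  have Uc: "\<Union>\<C> \<subseteq> carrier G"
    using subgroup.subset[OF normal_imp_subgroup[OF normal_Union_chain[OF \<C>]]] .
  have closure: "U <#> (T closure_of \<Union>\<C>) = (\<Union>N\<in>\<C>. U <#> N)"
    unfolding set_mult_closure_of[OF U_subgroup U_open Uc] unfolding set_mult_def by blast
  \<comment> \<open>Only the finitely many elements \<open>r\<inverse> r'\<close> matter, and they are caught by a single member of the chain.\<close>
  define P where "P = (\<lambda>(r, r'). inv r \<otimes> r') ` (R \<times> R) \<inter> (U <#> (T closure_of \<Union>\<C>))"
  have "finite P" unfolding P_def using R_cover(1) by (simp add: finite_Int)
  moreover have "P \<subseteq> \<Union>((\<lambda>N. U <#> N) ` \<C>)" unfolding P_def closure by blast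
  moreover have "(\<lambda>N. U <#> N) ` \<C> \<noteq> {}" using \<C>(3) by blast
  moreover have "subset.chain UNIV ((\<lambda>N. U <#> N) ` \<C>)"
    unfolding subset_chain_def
  proof (intro conjI ballI subset_UNIV)
    fix X Y assume "X \<in> (\<lambda>N. U <#> N) ` \<C>" "Y \<in> (\<lambda>N. U <#> N) ` \<C>"
    then obtain N N' where "N \<in> \<C>" "N' \<in> \<C>" "X = U <#> N" "Y = U <#> N'" by blast
    moreover have "N \<subseteq> N' \<or> N' \<subseteq> N" using \<C>(2) \<open>N \<in> \<C>\<close> \<open>N' \<in> \<C>\<close> by blast
    ultimately show "X \<subseteq> Y \<or> Y \<subseteq> X" using mono_set_mult[OF subset_refl[of U]] by blast
  qed
  ultimately obtain B where "B \<in> (\<lambda>N. U <#> N) ` \<C>" "P \<subseteq> B" by (rule finite_subset_Union_chain)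
  then obtain N0 where N0: "N0 \<in> \<C>" "P \<subseteq> U <#> N0" by blast
  have "cover_index (T closure_of \<Union>\<C>) = cover_index N0"
  proof (rule cover_index_cong)
    fix r r' assume "r \<in> R" "r' \<in> R"
    then show "inv r \<otimes> r' \<in> U <#> (T closure_of \<Union>\<C>) \<longleftrightarrow> inv r \<otimes> r' \<in> U <#> N0"
      using N0 unfolding P_def closure by auto
  qed
  then show ?thesis using N0(1) by blast
qed

lemma cover_index_Inter_chain:
  assumes \<C>: "\<forall>N\<in>\<C>. N \<lhd> G \<and> closedin T N" "\<forall>X\<in>\<C>. \<forall>Y\<in>\<C>. X \<subseteq> Y \<or> Y \<subseteq> X" "\<C> \<noteq> {}"
  shows "\<exists>N0\<in>\<C>. cover_index (\<Inter>\<C>) = cover_index N0"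
proof -
  have sub: "\<forall>N\<in>\<C>. subgroup N G \<and> closedin T N" using \<C>(1) normal_imp_subgroup by blast
  define P where "P = {p \<in> R \<times> R. inv (fst p) \<otimes> snd p \<notin> U <#> \<Inter>\<C>}"
  \<comment> \<open>By compactness of \<open>U\<close>, each of the finitely many elements \<open>r\<inverse> r'\<close> outside \<open>U \<Inter>\<C>\<close>
    already lies outside \<open>U N\<close> for some \<open>N\<close> of the chain.\<close>
  have "\<exists>N\<in>\<C>. inv (fst p) \<otimes> snd p \<notin> U <#> N" if "p \<in> P" for p
  proof -
    have "fst p \<in> carrier G" "snd p \<in> carrier G" using that R_cover(2) unfolding P_def by auto
    then have "inv (fst p) \<otimes> snd p \<in> carrier G" by simp
    then show ?thesis
      using set_mult_Inter_chain[OF U_subgroup U_compact _ _ sub \<C>(2,3)] that unfolding P_def by blast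
  qed
  then obtain \<phi> where \<phi>: "\<forall>p\<in>P. \<phi> p \<in> \<C> \<and> inv (fst p) \<otimes> snd p \<notin> U <#> \<phi> p" by metis
  obtain N0 where N0: "N0 \<in> \<C>" "\<forall>X\<in>\<phi> ` P. N0 \<subseteq> X"
  proof (cases "P = {}")
    case False
    have "subset.chain \<C> (\<phi> ` P)" using \<phi> \<C>(2) unfolding subset_chain_def by blast
    moreover have "finite (\<phi> ` P)" unfolding P_def using R_cover(1) by simp
    ultimately have "\<Inter>(\<phi> ` P) \<in> \<phi> ` P" using Inter_in_chain False by blast
    then show ?thesis using that \<phi> by blast
  qed (use \<C>(3) in blast)
  have "cover_index (\<Inter>\<C>) = cover_index N0"
  proof (rule cover_index_cong)
    fix r r' assume r: "r \<in> R" "r' \<in> R"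
    have "U <#> \<Inter>\<C> \<subseteq> U <#> N0" using N0(1) by (intro mono_set_mult) auto
    moreover have "inv r \<otimes> r' \<in> U <#> \<Inter>\<C>" if "inv r \<otimes> r' \<in> U <#> N0"
    proof (rule ccontr)
      assume "inv r \<otimes> r' \<notin> U <#> \<Inter>\<C>"
      then have p: "(r, r') \<in> P" unfolding P_def using r by simp
      then have "U <#> N0 \<subseteq> U <#> \<phi> (r, r')" using N0(2) by (intro mono_set_mult) auto
      moreover have "inv r \<otimes> r' \<notin> U <#> \<phi> (r, r')" using \<phi> p by fastforce
      ultimately show False using that by blast
    qed
    ultimately show "inv r \<otimes> r' \<in> U <#> \<Inter>\<C> \<longleftrightarrow> inv r \<otimes> r' \<in> U <#> N0" by blast
  qed
  then show ?thesis using N0(1) by blast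
qed

end

section \<open>Essentially chief series\<close>

definition essentially_chief_factor ::
  "('a, 'b) monoid_scheme \<Rightarrow> 'a topology \<Rightarrow> 'a set \<Rightarrow> 'a set \<Rightarrow> bool" where
  "essentially_chief_factor G T L K \<longleftrightarrow>
     compact_space (quotient_factor_topology G T L K) \<or>
     quotient_factor_topology G T L K =
       discrete_topology (topspace (quotient_factor_topology G T L K)) \<or>
     chief_factor G T L K"

inductive essentially_chief_ascent :: "('a, 'b) monoid_scheme \<Rightarrow> 'a topology \<Rightarrow> 'a set \<Rightarrow> bool"
  for G T where
  carrier: "essentially_chief_ascent G T (carrier G)"
| step: "closed_normal G T K \<Longrightarrow> closed_normal G T L \<Longrightarrow> K \<subseteq> L \<Longrightarrow>
         essentially_chief_factor G T L K \<Longrightarrow> essentially_chief_ascent G T L \<Longrightarrow>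
         essentially_chief_ascent G T K"

lemma essentially_chief_ascent_imp_series:
  assumes "essentially_chief_ascent G T K" and "closed_normal G T (carrier G)"
  shows "\<exists>N n. N 0 = K \<and> N n = carrier G \<and> (\<forall>i\<le>n. closed_normal G T (N i)) \<and>
     (\<forall>i<n. N i \<subseteq> N (Suc i)) \<and> (\<forall>i\<in>{1..n}. essentially_chief_factor G T (N i) (N (i - 1)))"
  using assms(1)
proof induction
  case carrier
  show ?case by (rule exI[of _ "\<lambda>_. carrier G"], rule exI[of _ 0]) (simp add: assms(2))
next
  case (step K L)
  then obtain N n where N: "N 0 = L" "N n = carrier G" "\<forall>i\<le>n. closed_normal G T (N i)"
    "\<forall>i<n. N i \<subseteq> N (Suc i)" "\<forall>i\<in>{1..n}. essentially_chief_factor G T (N i) (N (i - 1))"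
    by blast
  define N' where "N' = case_nat K N"
  have "\<forall>i\<le>Suc n. closed_normal G T (N' i)"
    using N(3) step.hyps(1) unfolding N'_def by (auto split: nat.split)
  moreover have "\<forall>i<Suc n. N' i \<subseteq> N' (Suc i)"
    using N(1,4) step.hyps(3) unfolding N'_def by (auto split: nat.split)
  moreover have "\<forall>i\<in>{1..Suc n}. essentially_chief_factor G T (N' i) (N' (i - 1))"
  proof
    fix i assume i: "i \<in> {1..Suc n}"
    show "essentially_chief_factor G T (N' i) (N' (i - 1))"
    proof (cases "i = 1")
      case False
      then obtain j where j: "i = Suc (Suc j)" "Suc j \<in> {1..n}" using i by (cases i; cases "i - 1") auto
      then have "essentially_chief_factor G T (N (Suc j)) (N (Suc j - 1))" using N(5) by blast
      then show ?thesis using j(1) unfolding N'_def by simp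
    qed (use N(1) step.hyps(4) N'_def in simp)
  qed
  moreover have "N' 0 = K" "N' (Suc n) = carrier G" using N(2) unfolding N'_def by simp_all
  ultimately show ?case by blast
qed

context tdlc_generated
begin

lemma exists_maximal_same_cover_index:
  assumes K: "closed_normal G T K"
  shows "\<exists>M. closed_normal G T M \<and> K \<subseteq> M \<and> cover_index M = cover_index K \<and>
           (\<forall>N. closed_normal G T N \<and> M \<subset> N \<longrightarrow> cover_index N \<noteq> cover_index K)"
proof -
  define D where "D = {N. closed_normal G T N \<and> K \<subseteq> N \<and> cover_index N = cover_index K}"
  have "\<exists>M\<in>D. \<forall>N\<in>D. M \<subseteq> N \<longrightarrow> N = M"
  proof (rule subset_Zorn)
    fix \<C> assume "subset.chain D \<C>"
    then have \<C>D: "\<C> \<subseteq> D" and \<C>: "\<forall>X\<in>\<C>. \<forall>Y\<in>\<C>. X \<subseteq> Y \<or> Y \<subseteq> X"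
      unfolding subset_chain_def by auto
    show "\<exists>B\<in>D. \<forall>N\<in>\<C>. N \<subseteq> B"
    proof (cases "\<C> = {}")
      case True
      then show ?thesis using K unfolding D_def by blast
    next
      case False
      have \<C>n: "\<forall>N\<in>\<C>. N \<lhd> G" using \<C>D unfolding D_def closed_normal_def by blast
      have "\<Union>\<C> \<subseteq> carrier G"
        using subgroup.subset[OF normal_imp_subgroup[OF normal_Union_chain[OF \<C>n \<C> False]]] .
      then have sub: "\<Union>\<C> \<subseteq> T closure_of \<Union>\<C>" using closure_of_subset topspace_eq by metis
      obtain N0 where N0: "N0 \<in> \<C>" "cover_index (T closure_of \<Union>\<C>) = cover_index N0"
        using cover_index_closure_Union_chain[OF \<C>n \<C> False] by blast
      then have "K \<subseteq> N0" "cover_index N0 = cover_index K" using \<C>D unfolding D_def by auto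
      then have "K \<subseteq> T closure_of \<Union>\<C>" "cover_index (T closure_of \<Union>\<C>) = cover_index K"
        using N0 sub by auto
      moreover have "closed_normal G T (T closure_of \<Union>\<C>)"
        unfolding closed_normal_def using normal_closure_of[OF normal_Union_chain[OF \<C>n \<C> False]] by simp
      ultimately have "T closure_of \<Union>\<C> \<in> D" unfolding D_def by blast
      then show ?thesis using sub by blast
    qed
  qed
  then obtain M where M: "M \<in> D" and max: "\<forall>N\<in>D. M \<subseteq> N \<longrightarrow> N = M" by blast
  have "cover_index N \<noteq> cover_index K" if "closed_normal G T N" "M \<subset> N" for N
  proof
    assume "cover_index N = cover_index K"
    then have "N \<in> D" using that M unfolding D_def by auto
    then show False using max that(2) by blast
  qed
  then show ?thesis using M unfolding D_def by blast
qed

lemma exists_chief_factor_above: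
  assumes M: "closed_normal G T M" "M \<noteq> carrier G"
    and index_drops: "\<And>N. closed_normal G T N \<Longrightarrow> M \<subset> N \<Longrightarrow> cover_index N \<noteq> cover_index M"
  shows "\<exists>L. closed_normal G T L \<and> M \<subset> L \<and> chief_factor G T L M"
proof -
  define E where "E = {N. closed_normal G T N \<and> M \<subset> N}"
  have "\<exists>L\<in>E. \<forall>N\<in>E. N \<subseteq> L \<longrightarrow> N = L"
  proof (rule subset_Zorn_min)
    fix \<C> assume "subset.chain E \<C>"
    then have \<C>E: "\<C> \<subseteq> E" and \<C>: "\<forall>X\<in>\<C>. \<forall>Y\<in>\<C>. X \<subseteq> Y \<or> Y \<subseteq> X"
      unfolding subset_chain_def by auto
    show "\<exists>L\<in>E. \<forall>N\<in>\<C>. L \<subseteq> N"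
    proof (cases "\<C> = {}")
      case True
      have "carrier G \<in> E"
        unfolding E_def using closed_normal_carrier M subgroup.subset[OF normal_imp_subgroup]
        unfolding closed_normal_def by blast
      then show ?thesis using True by blast
    next
      case False
      have \<C>cn: "\<forall>N\<in>\<C>. N \<lhd> G \<and> closedin T N" using \<C>E unfolding E_def closed_normal_def by blast
      have "closed_normal G T (\<Inter>\<C>)"
        unfolding closed_normal_def using \<C>cn False by (auto intro: normal_Inter closedin_Inter)
      moreover have "M \<subseteq> \<Inter>\<C>" using \<C>E unfolding E_def by blast
      \<comment> \<open>The intersection is strictly above \<open>M\<close>, because its index equals that of a member of the chain.\<close>
      moreover have "\<Inter>\<C> \<noteq> M"
      proof
        assume "\<Inter>\<C> = M"
        obtain N0 where "N0 \<in> \<C>" "cover_index (\<Inter>\<C>) = cover_index N0"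
          using cover_index_Inter_chain[OF \<C>cn \<C> False] by blast
        then show False using index_drops \<C>E \<open>\<Inter>\<C> = M\<close> unfolding E_def by auto
      qed
      ultimately have "\<Inter>\<C> \<in> E" unfolding E_def by blast
      then show ?thesis by blast
    qed
  qed
  then obtain L where L: "L \<in> E" and min: "\<forall>N\<in>E. N \<subseteq> L \<longrightarrow> N = L" by blast
  have "chief_factor G T L M"
    unfolding chief_factor_def using min unfolding E_def by blast
  then show ?thesis using L unfolding E_def by blast
qed

lemma essentially_chief_ascent_below_same_cover_index:
  assumes K: "closed_normal G T K" and M: "closed_normal G T M" and KM: "K \<subseteq> M"
    and eq: "cover_index M = cover_index K" and "essentially_chief_ascent G T M"
  shows "essentially_chief_ascent G T K"
proof -
  have Kn: "K \<lhd> G" and Mn: "M \<lhd> G" and Mcl: "closedin T M"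
    using K M unfolding closed_normal_def by auto
  \<comment> \<open>\<open>M \<inter> U K\<close> splits \<open>K \<le> M\<close> into a compact and a discrete factor.\<close>
  define M1 where "M1 = M \<inter> (U <#> K)"
  have M1n: "M1 \<lhd> G" unfolding M1_def by (rule normal_Int_U_set_mult[OF Kn Mn KM eq[symmetric]])
  have M1: "closed_normal G T M1"
    unfolding closed_normal_def using M1n closedin_Int[OF Mcl closedin_U_set_mult[OF Kn]] M1_def by simp
  have KM1: "K \<subseteq> M1" unfolding M1_def using KM subset_U_set_mult[OF Kn] by blast
  have "essentially_chief_factor G T M1 K"
    unfolding essentially_chief_factor_def M1_def
    using quotient_factor_topology_compact[OF U_subgroup U_open U_compact Kn normal_imp_subgroup[OF M1n]]
      M1 KM1 unfolding closed_normal_def M1_def by blast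
  moreover have "essentially_chief_factor G T M M1"
    unfolding essentially_chief_factor_def M1_def
    using quotient_factor_topology_discrete[OF normal_imp_subgroup[OF Mn] openin_U_set_mult[OF Kn]]
      normal_imp_subgroup[OF M1n] unfolding M1_def by blast
  ultimately show ?thesis
    using essentially_chief_ascent.step assms(5) M M1 K KM1 unfolding M1_def by blast
qed

lemma essentially_chief_ascent_closed_normal:
  assumes "closed_normal G T K"
  shows "essentially_chief_ascent G T K"
  using assms
proof (induction "cover_index K" arbitrary: K rule: less_induct)
  case less
  obtain M where M: "closed_normal G T M" "K \<subseteq> M" "cover_index M = cover_index K"
    and max: "\<forall>N. closed_normal G T N \<and> M \<subset> N \<longrightarrow> cover_index N \<noteq> cover_index K"
    using exists_maximal_same_cover_index[OF less.prems] by blast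
  have "essentially_chief_ascent G T M"
  proof (cases "M = carrier G")
    case True
    then show ?thesis using essentially_chief_ascent.carrier by simp
  next
    case False
    obtain L where L: "closed_normal G T L" "M \<subset> L" "chief_factor G T L M"
      using exists_chief_factor_above[OF M(1) False] max M(3) by auto
    have "cover_index L \<le> cover_index M"
      using cover_index_antimono[OF _ _ psubset_imp_subset[OF L(2)]] L(1) M(1)
      unfolding closed_normal_def by blast
    then have "cover_index L < cover_index K" using max L M(3) by fastforce
    then have "essentially_chief_ascent G T L" using less.hyps L(1) by blast
    moreover have "essentially_chief_factor G T L M"
      using L(3) unfolding essentially_chief_factor_def by blast
    ultimately show ?thesis using essentially_chief_ascent.step[OF M(1) L(1)] L(2) by blast
  qed
  then show ?case using essentially_chief_ascent_below_same_cover_index[OF less.prems M] by blast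
qed

end

theorem mainTheorem15:
  fixes G :: "('a, 'b) monoid_scheme" and T :: "'a topology"
  assumes "tdlc_group G T" and "compactly_generated G T"
  shows "\<exists>N n. essentially_chief_series G T N n"
proof -
  have tg: "topgroup G T"
    using assms(1) unfolding tdlc_group_def topological_group_def
    by (simp add: topgroup_def topgroup_axioms_def)
  interpret topgroup G T by (fact tg)
  have H: "Hausdorff_space T" "locally_compact_space T" "totally_disconnected_space T"
    using assms(1) unfolding tdlc_group_def by auto
  obtain U where U: "subgroup U G" "openin T U" "compactin T U"
    using compact_open_subgroup_exists[OF H] by blast
  obtain K0 where K0: "K0 \<subseteq> carrier G" "compactin T K0" "generate G K0 = carrier G"
    using assms(2) unfolding compactly_generated_def by blast
  interpret tdlc_generated G T U K0
    by (intro tdlc_generated.intro tg tdlc_generated_axioms.intro U K0)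
  have "closedin T {\<one>\<^bsub>G\<^esub>}"
    using closedin_t1_singleton[OF Hausdorff_imp_t1_space[OF H(1)]] topspace_eq by simp
  then have "closed_normal G T {\<one>\<^bsub>G\<^esub>}" unfolding closed_normal_def using one_is_normal by simp
  from essentially_chief_ascent_imp_series[OF essentially_chief_ascent_closed_normal[OF this]
      closed_normal_carrier]
  obtain N n where "N 0 = {\<one>\<^bsub>G\<^esub>}" "N n = carrier G" "\<forall>i\<le>n. closed_normal G T (N i)"
      "\<forall>i<n. N i \<subseteq> N (Suc i)" "\<forall>i\<in>{1..n}. essentially_chief_factor G T (N i) (N (i - 1))"
    by blast
  then have "essentially_chief_series G T N n"
    unfolding essentially_chief_series_def essentially_chief_factor_def by blast
  then show ?thesis by blast
qed

end
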